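(* Let $\varphi:(0,1]\to[0,1]$ be an increasing submultiplicative function (i.e. $\varphi(xy)\le\varphi(x)\varphi(y)$ for $x,y\in(0,1]$). The following are equivalent: (1) there exists $\lambda\in(0,1)$ with $\varphi(\lambda)<1$; (2) there is $C>0$ with $\varphi(x)\le C(1+\log(1/x))^{-1}$ for all $x\in(0,1]$; (3) for every $p>0$ there is $C_p>0$ with $\varphi(x)\le C_p(1+\log(1/x))^{-p}$ for all $x\in(0,1]$; (4) $\lim_{x\to0}\varphi(x)=0$. *)

theory Defs
  imports "HOL-Analysis.Analysis"
begin

end

theory Submission
  imports Defs "HOL-Real_Asymp.Real_Asymp"
begin

(* If \<phi>(\<lambda>) \<le> q < 1, submultiplicativity gives \<phi>(\<lambda>^n) \<le> q^n, and monotonicity turns this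
   into a power law \<phi>(x) \<le> x^b / q with b = ln q / ln \<lambda> > 0.  A power of x decays faster
   than any power of 1 + ln(1/x), so (1) gives (3), and (3) trivially gives (2).  Any decay
   of order (1 + ln(1/x))^-p with p > 0 forces \<phi>(x) \<rightarrow> 0, and then \<phi> < 1 somewhere. *)

definition log_decay :: "(real \<Rightarrow> real) \<Rightarrow> real \<Rightarrow> bool" where
  "log_decay \<phi> p \<longleftrightarrow> (\<exists>C>0. \<forall>x\<in>{0<..1}. \<phi> x \<le> C * (1 + ln (1 / x)) powr (-p))"

lemma powr_mult_ln_powr_bounded:
  fixes b p :: real
  assumes "b > 0"
  shows "\<exists>M>0. \<forall>x\<in>{0<..1}. x powr b * (1 + ln (1 / x)) powr p \<le> M"
proof -
  have "((\<lambda>x::real. x powr b * (1 + ln (1 / x)) powr p) \<longlongrightarrow> 0) (at_right 0)"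
    using assms by real_asymp
  then have "eventually (\<lambda>x. x powr b * (1 + ln (1 / x)) powr p < 1) (at_right (0::real))"
    by (rule order_tendstoD) simp
  then obtain d where d: "d > 0" "\<And>x. 0 < x \<Longrightarrow> x < d \<Longrightarrow> x powr b * (1 + ln (1 / x)) powr p < 1"
    unfolding eventually_at_right_field by auto
  define e where "e = min d 1"
  have e: "0 < e" "e \<le> 1" "e \<le> d"
    using d by (auto simp: e_def)
  define M where "M = 1 + (1 + ln (1 / e)) powr \<bar>p\<bar>"
  have "x powr b * (1 + ln (1 / x)) powr p \<le> M" if x: "x \<in> {0<..1}" for x
  proof (cases "x < d")
    case True
    then have "x powr b * (1 + ln (1 / x)) powr p < 1"
      using d(2) x by simp
    moreover have "0 \<le> (1 + ln (1 / e)) powr \<bar>p\<bar>"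
      by simp
    ultimately show ?thesis
      unfolding M_def by linarith
  next
    case False
    then have "e \<le> x"
      using e by simp
    have L: "1 \<le> 1 + ln (1 / x)"
      using x by simp
    have "x powr b * (1 + ln (1 / x)) powr p \<le> (1 + ln (1 / x)) powr p"
      using x assms by (intro mult_left_le_one_le) (simp_all add: powr_le1)
    also have "\<dots> \<le> (1 + ln (1 / x)) powr \<bar>p\<bar>"
      using L by (intro powr_mono) auto
    also have "\<dots> \<le> (1 + ln (1 / e)) powr \<bar>p\<bar>"
      using L \<open>e \<le> x\<close> x e by (intro powr_mono2) (simp, linarith, simp add: ln_div)
    finally show ?thesis
      unfolding M_def by linarith
  qed
  moreover have "M > 0"
    unfolding M_def by (simp add: add_pos_nonneg)
  ultimately show ?thesis
    by blast
qed

lemma power_decay_imp_log_decay: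
  assumes "b > 0" and bound: "\<And>x. x \<in> {0<..1} \<Longrightarrow> \<phi> x \<le> A * x powr b"
  shows "log_decay \<phi> p"
proof -
  obtain M where M: "M > 0" "\<And>x. x \<in> {0<..1} \<Longrightarrow> x powr b * (1 + ln (1 / x)) powr p \<le> M"
    using powr_mult_ln_powr_bounded[OF \<open>b > 0\<close>] by blast
  define C where "C = max A 1 * M"
  have "\<phi> x \<le> C * (1 + ln (1 / x)) powr (-p)" if x: "x \<in> {0<..1}" for x
  proof -
    have pos: "1 + ln (1 / x) > 0"
      using x by (simp add: add_pos_nonneg)
    have "x powr b = x powr b * (1 + ln (1 / x)) powr p * (1 + ln (1 / x)) powr (-p)"
      using pos by (simp add: powr_minus field_simps)
    also have "\<dots> \<le> M * (1 + ln (1 / x)) powr (-p)"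
      using M(2)[OF x] by (intro mult_right_mono) auto
    finally have "max A 1 * x powr b \<le> C * (1 + ln (1 / x)) powr (-p)"
      unfolding C_def mult.assoc by (rule mult_left_mono) simp
    moreover have "A * x powr b \<le> max A 1 * x powr b"
      by (simp add: mult_right_mono)
    ultimately show ?thesis
      using bound[OF x] by linarith
  qed
  moreover have "C > 0"
    using M by (simp add: C_def)
  ultimately show ?thesis
    unfolding log_decay_def by blast
qed

lemma submult_power_le:
  fixes \<phi> :: "real \<Rightarrow> real"
  assumes range: "\<And>x. x \<in> {0<..1} \<Longrightarrow> \<phi> x \<in> {0..1}"
    and submult: "\<And>x y. x \<in> {0<..1} \<Longrightarrow> y \<in> {0<..1} \<Longrightarrow> \<phi> (x * y) \<le> \<phi> x * \<phi> y"
    and l: "l \<in> {0<..1}"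
  shows "\<phi> (l ^ n) \<le> \<phi> l ^ n"
proof (induction n)
  case 0
  then show ?case
    using range[of 1] by simp
next
  case (Suc n)
  have ln: "l ^ n \<in> {0<..1}"
    using l by (simp add: power_le_one)
  have "\<phi> (l ^ Suc n) \<le> \<phi> l * \<phi> (l ^ n)"
    using submult[OF l ln] by simp
  also have "\<dots> \<le> \<phi> l * \<phi> l ^ n"
    using range[OF l] Suc by (intro mult_left_mono) auto
  finally show ?case
    by simp
qed

lemma submult_power_decay:
  fixes \<phi> :: "real \<Rightarrow> real"
  assumes range: "\<And>x. x \<in> {0<..1} \<Longrightarrow> \<phi> x \<in> {0..1}"
    and incr: "mono_on {0<..1} \<phi>"
    and submult: "\<And>x y. x \<in> {0<..1} \<Longrightarrow> y \<in> {0<..1} \<Longrightarrow> \<phi> (x * y) \<le> \<phi> x * \<phi> y"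
    and l: "l \<in> {0<..<1}" and q: "q \<in> {0<..<1}" "\<phi> l \<le> q"
    and x: "x \<in> {0<..1}"
  shows "\<phi> x \<le> 1 / q * x powr (ln q / ln l)"
proof -
  have "ln l < 0"
    using l by simp
  then have ratio: "0 \<le> ln x / ln l"
    using x by (simp add: divide_nonpos_neg)
  \<comment> \<open>the largest n with x \<le> l^n\<close>
  define n where "n = nat \<lfloor>ln x / ln l\<rfloor>"
  have "real n \<le> ln x / ln l"
    using ratio unfolding n_def by linarith
  then have "ln x \<le> real n * ln l"
    using \<open>ln l < 0\<close> by (simp add: le_divide_eq)
  then have "x \<le> l ^ n"
    using x l by (simp add: ln_realpow[symmetric])
  moreover have "l ^ n \<in> {0<..1}"
    using l by (simp add: power_le_one)
  ultimately have "\<phi> x \<le> \<phi> (l ^ n)"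
    using incr x by (auto simp: mono_on_def)
  also have "\<dots> \<le> \<phi> l ^ n"
    using l by (intro submult_power_le[OF range submult]) auto
  also have "\<dots> \<le> q ^ n"
    using range[of l] l q by (intro power_mono) auto
  also have "\<dots> = q powr real n"
    using q by (simp add: powr_realpow)
  also have "\<dots> \<le> q powr (ln x / ln l - 1)"
    using q ratio unfolding n_def by (intro powr_mono') (linarith, auto)
  also have "\<dots> = 1 / q * q powr (ln x / ln l)"
    using q by (simp add: powr_diff)
  also have "q powr (ln x / ln l) = x powr (ln q / ln l)"
    using q x by (simp add: powr_def)
  finally show ?thesis .
qed

lemma submult_below_one_imp_log_decay:
  fixes \<phi> :: "real \<Rightarrow> real"
  assumes range: "\<And>x. x \<in> {0<..1} \<Longrightarrow> \<phi> x \<in> {0..1}"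
    and incr: "mono_on {0<..1} \<phi>"
    and submult: "\<And>x y. x \<in> {0<..1} \<Longrightarrow> y \<in> {0<..1} \<Longrightarrow> \<phi> (x * y) \<le> \<phi> x * \<phi> y"
    and l: "l \<in> {0<..<1}" "\<phi> l < 1"
  shows "log_decay \<phi> p"
proof -
  \<comment> \<open>q must be positive for ln q to make sense, even if \<phi> l = 0\<close>
  define q where "q = max (\<phi> l) (1 / 2)"
  have q: "q \<in> {0<..<1}" "\<phi> l \<le> q"
    using l by (auto simp: q_def)
  have "ln q / ln l > 0"
    using q l by (simp add: divide_neg_neg)
  then show ?thesis
    using submult_power_decay[OF range incr submult l(1) q] by (rule power_decay_imp_log_decay)
qed

lemma log_decay_imp_tendsto_zero:
  assumes nonneg: "\<And>x. x \<in> {0<..1} \<Longrightarrow> 0 \<le> \<phi> x" and "p > 0" and "log_decay \<phi> p"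
  shows "(\<phi> \<longlongrightarrow> 0) (at_right 0)"
proof -
  obtain C where C: "C > 0" "\<And>x. x \<in> {0<..1} \<Longrightarrow> \<phi> x \<le> C * (1 + ln (1 / x)) powr (-p)"
    using \<open>log_decay \<phi> p\<close> unfolding log_decay_def by blast
  have lim: "((\<lambda>x::real. C * (1 + ln (1 / x)) powr (-p)) \<longlongrightarrow> 0) (at_right 0)"
    using \<open>p > 0\<close> by real_asymp
  have near0: "eventually (\<lambda>x::real. x \<in> {0<..1}) (at_right 0)"
    unfolding eventually_at_right_field by (intro exI[of _ 1]) auto
  show ?thesis
  proof (rule tendsto_sandwich[OF _ _ tendsto_const lim])
    show "\<forall>\<^sub>F x in at_right 0. 0 \<le> \<phi> x"
      using near0 by eventually_elim (use nonneg in auto)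
    show "\<forall>\<^sub>F x in at_right 0. \<phi> x \<le> C * (1 + ln (1 / x)) powr (-p)"
      using near0 by eventually_elim (use C in auto)
  qed
qed

lemma tendsto_zero_imp_below_one:
  fixes \<phi> :: "real \<Rightarrow> real"
  assumes "(\<phi> \<longlongrightarrow> 0) (at_right 0)"
  shows "\<exists>l\<in>{0<..<1}. \<phi> l < 1"
proof -
  have "eventually (\<lambda>x. \<phi> x < 1) (at_right 0)"
    using assms by (rule order_tendstoD) simp
  moreover have "eventually (\<lambda>x::real. x < 1) (at_right 0)"
    unfolding eventually_at_right_field by (intro exI[of _ 1]) auto
  moreover have "eventually (\<lambda>x::real. 0 < x) (at_right 0)"
    by (rule eventually_at_right_less)
  ultimately have "eventually (\<lambda>x. x \<in> {0<..<1} \<and> \<phi> x < 1) (at_right 0)"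
    by eventually_elim auto
  then show ?thesis
    using eventually_happens'[OF trivial_limit_at_right_real] by blast
qed

theorem corollary2p2:
  fixes \<phi> :: "real \<Rightarrow> real"
  assumes range: "\<And>x. x \<in> {0<..1} \<Longrightarrow> \<phi> x \<in> {0..1}"
    and incr: "mono_on {0<..1} \<phi>"
    and submult: "\<And>x y. x \<in> {0<..1} \<Longrightarrow> y \<in> {0<..1} \<Longrightarrow> \<phi> (x * y) \<le> \<phi> x * \<phi> y"
  shows "((\<exists>l\<in>{0<..<1}. \<phi> l < 1)
          \<longleftrightarrow> (\<exists>C>0. \<forall>x\<in>{0<..1}. \<phi> x \<le> C * (1 + ln (1 / x)) powr (-1)))
       \<and> ((\<exists>C>0. \<forall>x\<in>{0<..1}. \<phi> x \<le> C * (1 + ln (1 / x)) powr (-1))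
          \<longleftrightarrow> (\<forall>p::real>0. \<exists>C>0. \<forall>x\<in>{0<..1}. \<phi> x \<le> C * (1 + ln (1 / x)) powr (-p)))
       \<and> ((\<forall>p::real>0. \<exists>C>0. \<forall>x\<in>{0<..1}. \<phi> x \<le> C * (1 + ln (1 / x)) powr (-p))
          \<longleftrightarrow> (\<phi> \<longlongrightarrow> 0) (at_right 0))"
proof -
  have "(\<exists>l\<in>{0<..<1}. \<phi> l < 1) \<Longrightarrow> \<forall>p>0. log_decay \<phi> p"
    using submult_below_one_imp_log_decay[OF range incr submult] by blast
  moreover have "log_decay \<phi> 1 \<Longrightarrow> (\<phi> \<longlongrightarrow> 0) (at_right 0)"
    using log_decay_imp_tendsto_zero[of \<phi> 1] range by simp
  moreover have "(\<phi> \<longlongrightarrow> 0) (at_right 0) \<Longrightarrow> \<exists>l\<in>{0<..<1}. \<phi> l < 1"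
    by (rule tendsto_zero_imp_below_one)
  ultimately show ?thesis
    unfolding log_decay_def by (meson zero_less_one)
qed

end
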